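(* Let $G$ be a $W(K_3)$-free finite simple graph and let $x_1,x_2,x_3$ be three vertices of $G$ which are pairwise adjacent (form a triangle). Then $$\alpha_2\Big(G\setminus \bigcup_{i=1}^3 N_G(x_i)\Big)\geq \alpha_2(G)-2.$$
   Context: For a vertex $x$, $N_G(x)$ is its set of neighbours and $N_G[x]=N_G(x)\cup\{x\}$. For $U\subseteq V(G)$, $G\setminus U$ is the graph with vertex set $V(G)\setminus U$ and edge set $\{e\in E(G): e\cap U=\emptyset\}$. The star with center $x$ is the subgraph with vertex set $N_G[x]$ and edges $\{xy:y\in N_G(x)\}$. A star packing of $G$ is a family of stars of $G$ whose vertex sets are pairwise disjoint; $\alpha_2(G)$, the star packing number, is the maximum size of a star packing of $G$. A whiskered triangle $W(K_3)$ is the graph obtained from a triangle by attaching a pendant edge (to a new vertex of degree one) at each of its three vertices; $G$ is $W(K_3)$-free if it has no induced subgraph isomorphic to $W(K_3)$. *)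

theory Defs
  imports Main
begin

definition simple_graph :: "'a set \<Rightarrow> ('a \<Rightarrow> 'a \<Rightarrow> bool) \<Rightarrow> bool" where
  "simple_graph V E \<longleftrightarrow> finite V \<and> (\<forall>x y. E x y \<longrightarrow> E y x) \<and> (\<forall>x. \<not> E x x)
     \<and> (\<forall>x y. E x y \<longrightarrow> x \<in> V \<and> y \<in> V)"

definition nbhd :: "'a set \<Rightarrow> ('a \<Rightarrow> 'a \<Rightarrow> bool) \<Rightarrow> 'a \<Rightarrow> 'a set" where
  "nbhd V E x = {y \<in> V. E x y}"

definition cnbhd :: "'a set \<Rightarrow> ('a \<Rightarrow> 'a \<Rightarrow> bool) \<Rightarrow> 'a \<Rightarrow> 'a set" where
  "cnbhd V E x = insert x (nbhd V E x)"

definition del_verts_V :: "'a set \<Rightarrow> 'a set \<Rightarrow> 'a set" where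
  "del_verts_V V U = V - U"

definition del_verts_E :: "'a set \<Rightarrow> ('a \<Rightarrow> 'a \<Rightarrow> bool) \<Rightarrow> 'a set \<Rightarrow> ('a \<Rightarrow> 'a \<Rightarrow> bool)" where
  "del_verts_E V E U = (\<lambda>x y. E x y \<and> x \<in> V - U \<and> y \<in> V - U)"

text \<open>A star is determined by its center x (vertex set N[x]); a star packing is
a set of centers whose closed neighbourhoods are pairwise disjoint.\<close>
definition star_packing :: "'a set \<Rightarrow> ('a \<Rightarrow> 'a \<Rightarrow> bool) \<Rightarrow> 'a set \<Rightarrow> bool" where
  "star_packing V E S \<longleftrightarrow> S \<subseteq> V \<and>
     (\<forall>x\<in>S. \<forall>y\<in>S. x \<noteq> y \<longrightarrow> cnbhd V E x \<inter> cnbhd V E y = {})"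

definition star_packing_number :: "'a set \<Rightarrow> ('a \<Rightarrow> 'a \<Rightarrow> bool) \<Rightarrow> nat" where
  "star_packing_number V E = Max (card ` {S. star_packing V E S})"

definition induced_whiskered_triangle ::
  "'a set \<Rightarrow> ('a \<Rightarrow> 'a \<Rightarrow> bool) \<Rightarrow> 'a \<Rightarrow> 'a \<Rightarrow> 'a \<Rightarrow> 'a \<Rightarrow> 'a \<Rightarrow> 'a \<Rightarrow> bool" where
  "induced_whiskered_triangle V E a1 a2 a3 b1 b2 b3 \<longleftrightarrow>
     {a1, a2, a3, b1, b2, b3} \<subseteq> V \<and> distinct [a1, a2, a3, b1, b2, b3] \<and>
     E a1 a2 \<and> E a2 a3 \<and> E a1 a3 \<and> E a1 b1 \<and> E a2 b2 \<and> E a3 b3 \<and>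
     \<not> E a1 b2 \<and> \<not> E a1 b3 \<and> \<not> E a2 b1 \<and> \<not> E a2 b3 \<and> \<not> E a3 b1 \<and> \<not> E a3 b2 \<and>
     \<not> E b1 b2 \<and> \<not> E b1 b3 \<and> \<not> E b2 b3"

definition W_K3_free :: "'a set \<Rightarrow> ('a \<Rightarrow> 'a \<Rightarrow> bool) \<Rightarrow> bool" where
  "W_K3_free V E \<longleftrightarrow> \<not> (\<exists>a1 a2 a3 b1 b2 b3. induced_whiskered_triangle V E a1 a2 a3 b1 b2 b3)"

end

theory Submission
  imports Defs
begin

text \<open>Take a maximum star packing S of G and let N be the union of the open
neighbourhoods of the triangle x1 x2 x3. The closed neighbourhoods of the
centres in S are disjoint, so a vertex is adjacent to at most one centre and no
two centres are adjacent. Hence choosing for each centre in N a triangle vertex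
adjacent to it is injective; if three centres lay in N they would be matched to
x1, x2, x3 and, with the triangle, form an induced whiskered triangle. So at
most two centres lie in N, and the remaining centres still form a star packing
of G minus N, whose closed neighbourhoods only shrink.\<close>

lemma star_packing_cnbhd_disjoint:
  assumes "star_packing V E S" "s \<in> S" "t \<in> S" "s \<noteq> t"
  shows "cnbhd V E s \<inter> cnbhd V E t = {}"
  using assms unfolding star_packing_def by blast

lemma star_packing_common_neighbour:
  assumes g: "simple_graph V E" and S: "star_packing V E S"
    and "s \<in> S" "t \<in> S" "E z s" "E z t"
  shows "s = t"
proof (rule ccontr)
  assume "s \<noteq> t"
  have "E s z" "E t z" "z \<in> V"
    using g \<open>E z s\<close> \<open>E z t\<close> unfolding simple_graph_def by blast+
  then have "z \<in> cnbhd V E s \<inter> cnbhd V E t" unfolding cnbhd_def nbhd_def by blast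
  with star_packing_cnbhd_disjoint[OF S \<open>s \<in> S\<close> \<open>t \<in> S\<close> \<open>s \<noteq> t\<close>] show False by blast
qed

lemma star_packing_not_adjacent:
  assumes g: "simple_graph V E" and S: "star_packing V E S" and "s \<in> S" "t \<in> S"
  shows "\<not> E s t"
proof
  assume "E s t"
  moreover have "s \<noteq> t" using g \<open>E s t\<close> unfolding simple_graph_def by blast
  moreover have "t \<in> V" using g \<open>E s t\<close> unfolding simple_graph_def by blast
  ultimately have "t \<in> cnbhd V E s \<inter> cnbhd V E t" unfolding cnbhd_def nbhd_def by blast
  with star_packing_cnbhd_disjoint[OF S \<open>s \<in> S\<close> \<open>t \<in> S\<close> \<open>s \<noteq> t\<close>] show False by blast
qed

lemma induced_whiskered_triangle_of_star_packing:
  assumes g: "simple_graph V E" and S: "star_packing V E S"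
    and y: "E y1 y2" "E y2 y3" "E y1 y3"
    and s: "s1 \<in> S" "s2 \<in> S" "s3 \<in> S" "distinct [s1, s2, s3]"
    and a: "E y1 s1" "E y2 s2" "E y3 s3"
  shows "induced_whiskered_triangle V E y1 y2 y3 s1 s2 s3"
proof -
  have irr: "\<And>x. \<not> E x x" and inV: "\<And>x y. E x y \<Longrightarrow> x \<in> V \<and> y \<in> V"
    using g unfolding simple_graph_def by blast+
  have common: "\<And>z s t. s \<in> S \<Longrightarrow> t \<in> S \<Longrightarrow> E z s \<Longrightarrow> E z t \<Longrightarrow> s = t"
    using star_packing_common_neighbour[OF g S] by blast
  have nonadj: "\<And>s t. s \<in> S \<Longrightarrow> t \<in> S \<Longrightarrow> \<not> E s t"
    using star_packing_not_adjacent[OF g S] by blast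
  have "distinct [y1, y2, y3, s1, s2, s3]"
    using s irr y a nonadj[OF s(1) s(2)] nonadj[OF s(1) s(3)] nonadj[OF s(2) s(3)]
      nonadj[OF s(2) s(1)] nonadj[OF s(3) s(1)] nonadj[OF s(3) s(2)]
    by auto
  moreover have "\<not> E y1 s2" "\<not> E y1 s3" "\<not> E y2 s1" "\<not> E y2 s3" "\<not> E y3 s1" "\<not> E y3 s2"
    using common s a by fastforce+
  ultimately show ?thesis
    unfolding induced_whiskered_triangle_def using inV y a nonadj s by auto
qed

lemma card_star_packing_centres_near_triangle:
  assumes g: "simple_graph V E" and w: "W_K3_free V E" and S: "star_packing V E S"
    and y: "E x1 x2" "E x2 x3" "E x1 x3"
  shows "card (S \<inter> (nbhd V E x1 \<union> nbhd V E x2 \<union> nbhd V E x3)) \<le> 2"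
proof (rule ccontr)
  define C where "C = S \<inter> (nbhd V E x1 \<union> nbhd V E x2 \<union> nbhd V E x3)"
  define T where "T = {x1, x2, x3}"
  define f where "f v = (SOME x. x \<in> T \<and> E x v)" for v
  assume "\<not> card C \<le> 2"
  have irr: "\<And>x. \<not> E x x" using g unfolding simple_graph_def by blast
  have f: "f v \<in> T \<and> E (f v) v" if "v \<in> C" for v
    unfolding f_def by (rule someI_ex) (use that in \<open>auto simp: C_def T_def nbhd_def\<close>)
  have "inj_on f C"
    by (rule inj_onI) (metis f C_def IntD1 star_packing_common_neighbour[OF g S])
  then have "card (f ` C) = card C" by (rule card_image)
  moreover have "card T \<le> 3" unfolding T_def by (simp add: card_insert_if)
  ultimately have "f ` C = T"
    using f \<open>\<not> card C \<le> 2\<close> by (intro card_seteq) (auto simp: T_def)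
  then obtain s1 s2 s3 where s: "s1 \<in> C" "s2 \<in> C" "s3 \<in> C"
    and fs: "f s1 = x1" "f s2 = x2" "f s3 = x3"
    unfolding T_def by (metis imageE insertI1 insert_commute)
  have "distinct [x1, x2, x3]" using y irr by auto
  then have "distinct [s1, s2, s3]" using fs by auto
  then have "induced_whiskered_triangle V E x1 x2 x3 s1 s2 s3"
    using induced_whiskered_triangle_of_star_packing[OF g S y] s f[of s1] f[of s2] f[of s3] fs
    by (auto simp: C_def)
  with w show False unfolding W_K3_free_def by blast
qed

lemma star_packing_del_verts:
  assumes "star_packing V E S"
  shows "star_packing (del_verts_V V U) (del_verts_E V E U) (S - U)"
proof -
  have "cnbhd (del_verts_V V U) (del_verts_E V E U) x \<subseteq> cnbhd V E x" for x
    unfolding cnbhd_def nbhd_def del_verts_V_def del_verts_E_def by auto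
  then show ?thesis using assms unfolding star_packing_def del_verts_V_def by blast
qed

lemma finite_star_packings:
  assumes "finite V"
  shows "finite {S. star_packing V E S}"
  by (rule finite_subset[of _ "Pow V"]) (auto simp: star_packing_def assms)

lemma card_le_star_packing_number:
  assumes "finite V" "star_packing V E S"
  shows "card S \<le> star_packing_number V E"
  unfolding star_packing_number_def using finite_star_packings[OF assms(1)] assms(2)
  by (intro Max_ge) auto

lemma maximum_star_packing_exists:
  assumes "finite V"
  obtains S where "star_packing V E S" "card S = star_packing_number V E"
proof -
  have "star_packing V E {}" by (simp add: star_packing_def)
  then have "star_packing_number V E \<in> card ` {S. star_packing V E S}"
    unfolding star_packing_number_def using finite_star_packings[OF assms]
    by (intro Max_in) auto
  then obtain S where "star_packing V E S" "star_packing_number V E = card S"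
    by blast
  then show ?thesis using that by simp
qed

theorem lemma3p1:
  fixes V :: "'a set" and E :: "'a \<Rightarrow> 'a \<Rightarrow> bool" and x1 x2 x3 :: 'a
  assumes "simple_graph V E"
    and "W_K3_free V E"
    and "x1 \<in> V" and "x2 \<in> V" and "x3 \<in> V"
    and "E x1 x2" and "E x2 x3" and "E x1 x3"
  shows "int (star_packing_number
                (del_verts_V V (nbhd V E x1 \<union> nbhd V E x2 \<union> nbhd V E x3))
                (del_verts_E V E (nbhd V E x1 \<union> nbhd V E x2 \<union> nbhd V E x3)))
         \<ge> int (star_packing_number V E) - 2"
proof -
  define N where "N = nbhd V E x1 \<union> nbhd V E x2 \<union> nbhd V E x3"
  have fin: "finite V" using assms(1) unfolding simple_graph_def by blast
  obtain S where S: "star_packing V E S" "card S = star_packing_number V E"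
    using maximum_star_packing_exists[OF fin] .
  have "S \<subseteq> V" using S(1) unfolding star_packing_def by blast
  then have "finite S" using fin by (rule finite_subset)
  then have "card S = card (S \<inter> N) + card (S - N)" by (rule card_Int_Diff)
  moreover have "card (S \<inter> N) \<le> 2"
    unfolding N_def by (rule card_star_packing_centres_near_triangle[OF assms(1,2) S(1) assms(6-8)])
  moreover have "card (S - N) \<le> star_packing_number (del_verts_V V N) (del_verts_E V E N)"
  proof (rule card_le_star_packing_number)
    show "finite (del_verts_V V N)" using fin by (simp add: del_verts_V_def)
  qed (rule star_packing_del_verts[OF S(1)])
  ultimately show ?thesis using S(2) unfolding N_def by linarith
qed

end
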